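(* Let $n\geq 2$, $m>0$, and let $\tau$ be a maximal simplex of $\Delta_m^{n,2}=\mathrm{VR}(\{0,\ldots,m\}^n;2)$. Writing $V=\{0,\ldots,m\}^n$, one of the following holds: (i) $\tau=N[x]\cap V$ for some $x\in\mathbb{Z}^n$; (ii) $\tau=\{x,x^{i_0},x^{j_0},x^{i_0,j_0}\}\cap V$ for some $x\in\mathbb{Z}^n$ and $i_0,j_0\in[n]^{\pm}$; (iii) $\tau=\{x,x^{i_0,j_0},x^{j_0,k_0},x^{i_0,k_0}\}\cap V$ for some $x\in\mathbb{Z}^n$ and $i_0,j_0,k_0\in[n]^{\pm}$.
   Context: $\mathbb{Z}^n$ carries the Manhattan metric $d(x,y)=\sum_{i=1}^n|x_i-y_i|$; $\mathrm{VR}(X;r)$ is the simplicial complex on $X$ whose simplices are finite subsets of diameter at most $r$. Write $[n]=\{1,\ldots,n\}$, $[-n]=\{-1,\ldots,-n\}$, $[n]^{\pm}=[n]\cup[-n]$. For $x\in\mathbb{Z}^n$ and $i_1,\ldots,i_k\in[n]^{\pm}$ with pairwise distinct absolute values, $x^{i_1,\ldots,i_k}$ is obtained from $x$ by adding $1$ to coordinate $j$ for each $j\in\{i_1,\ldots,i_k\}\cap[n]$ and subtracting $1$ from coordinate $j$ for each $j$ with $-j\in\{i_1,\ldots,i_k\}$. $N[x]=\{y\in\mathbb{Z}^n: d(x,y)\leq 1\}$. *)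

theory Defs
  imports Main
begin

text \<open>Points of Z^n are represented as functions nat => int that vanish outside
coordinates 1..n.  Signed indices in [n]^{+-} are integers i with i ~= 0 and |i| <= n.\<close>

type_synonym pt = "nat \<Rightarrow> int"

definition lattice :: "nat \<Rightarrow> pt set" where
  "lattice n = {x. \<forall>i. i \<notin> {1..n} \<longrightarrow> x i = 0}"

definition grid :: "nat \<Rightarrow> nat \<Rightarrow> pt set" where
  "grid n m = {x \<in> lattice n. \<forall>i\<in>{1..n}. 0 \<le> x i \<and> x i \<le> int m}"

definition mdist :: "nat \<Rightarrow> pt \<Rightarrow> pt \<Rightarrow> int" where
  "mdist n x y = (\<Sum>i=1..n. \<bar>x i - y i\<bar>)"

definition vr_simplex :: "nat \<Rightarrow> pt set \<Rightarrow> int \<Rightarrow> pt set \<Rightarrow> bool" where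
  "vr_simplex n X r \<sigma> \<longleftrightarrow> \<sigma> \<noteq> {} \<and> finite \<sigma> \<and> \<sigma> \<subseteq> X \<and>
     (\<forall>x\<in>\<sigma>. \<forall>y\<in>\<sigma>. mdist n x y \<le> r)"

definition maximal_simplex :: "nat \<Rightarrow> pt set \<Rightarrow> int \<Rightarrow> pt set \<Rightarrow> bool" where
  "maximal_simplex n X r \<tau> \<longleftrightarrow> vr_simplex n X r \<tau> \<and>
     (\<forall>\<sigma>. vr_simplex n X r \<sigma> \<and> \<tau> \<subseteq> \<sigma> \<longrightarrow> \<sigma> = \<tau>)"

definition signed_idx :: "nat \<Rightarrow> int \<Rightarrow> bool" where
  "signed_idx n i \<longleftrightarrow> i \<noteq> 0 \<and> \<bar>i\<bar> \<le> int n"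

definition shift :: "pt \<Rightarrow> int \<Rightarrow> pt" where
  "shift x i = x(nat \<bar>i\<bar> := x (nat \<bar>i\<bar>) + sgn i)"

definition closed_nbhd :: "nat \<Rightarrow> pt \<Rightarrow> pt set" where
  "closed_nbhd n x = {y \<in> lattice n. mdist n x y \<le> 1}"

end

theory Submission
  imports Defs
begin

text \<open>Let \<open>S\<close> be a set of lattice points of diameter at most 2. Call a signed index \<open>a\<close> a
direction from \<open>p\<close> towards \<open>s\<close> if \<open>p\<^sup>a\<close> is closer to \<open>s\<close> than \<open>p\<close>; a point at distance 2 from \<open>p\<close>
is determined by any two of its directions, and two points at distance 2 from \<open>p\<close> and from each
other share a direction. If two points of \<open>S\<close> are at distance 1, a parity argument places \<open>S\<close>
in a unit square unless one of them is a centre. Otherwise all distances in \<open>S\<close> are 2, and either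
all points of \<open>S\<close> other than \<open>p\<close> share a direction \<open>a\<close> (so \<open>p\<^sup>a\<close> is a centre) or three of them
have direction pairs \<open>{a,b}, {b,c}, {a,c}\<close> and pin \<open>S\<close> down to a tetrahedron. Each of these
cells has diameter 2, so a maximal simplex is the trace of its cell on the grid.\<close>

lemma mdist_nonneg: "0 \<le> mdist n x y"
  by (simp add: mdist_def sum_nonneg)

lemma mdist_commute: "mdist n x y = mdist n y x"
  by (simp add: mdist_def abs_minus_commute)

lemma mdist_self [simp]: "mdist n x x = 0"
  by (simp add: mdist_def)

lemma mdist_triangle: "mdist n x z \<le> mdist n x y + mdist n y z"
  unfolding mdist_def sum.distrib[symmetric] by (rule sum_mono) arith

lemma mdist_le_2_via: "mdist n u w \<le> 1 \<Longrightarrow> mdist n w v \<le> 1 \<Longrightarrow> mdist n u v \<le> 2"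
  using mdist_triangle[of n u v w] by simp

lemma mdist_eq_0_imp_eq:
  assumes "x \<in> lattice n" "y \<in> lattice n" "mdist n x y = 0"
  shows "x = y"
proof
  fix i
  have "\<forall>i\<in>{1..n}. \<bar>x i - y i\<bar> = 0"
    using assms(3) unfolding mdist_def by (subst sum_nonneg_eq_0_iff[symmetric]) auto
  then show "x i = y i"
    using assms(1,2) unfolding lattice_def by (cases "i \<in> {1..n}") auto
qed

lemma even_mdist_triangle: "even (mdist n x y + mdist n y z + mdist n x z)"
proof -
  have "mdist n x y + mdist n y z + mdist n x z =
      (\<Sum>i=1..n. \<bar>x i - y i\<bar> + \<bar>y i - z i\<bar> + \<bar>x i - z i\<bar>)"
    by (simp add: mdist_def sum.distrib)
  also have "even \<dots>"
    by (rule dvd_sum) (simp add: abs_if, presburger)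
  finally show ?thesis .
qed

lemma mdist_eq_1_of_odd:
  assumes "mdist n y z \<le> 2" "odd (mdist n x y + mdist n x z)"
  shows "mdist n y z = 1"
  using even_mdist_triangle[of n x y z] assms mdist_nonneg[of n y z] by presburger

lemma signed_idx_coord: "signed_idx n a \<Longrightarrow> nat \<bar>a\<bar> \<in> {1..n}"
  unfolding signed_idx_def by auto

lemma sgn_signed_idx: "signed_idx n a \<Longrightarrow> sgn a = 1 \<or> sgn a = -1"
  unfolding signed_idx_def by (auto simp: sgn_if)

lemma shift_in_lattice: "x \<in> lattice n \<Longrightarrow> signed_idx n a \<Longrightarrow> shift x a \<in> lattice n"
  using signed_idx_coord[of n a] unfolding lattice_def shift_def by auto

lemma shift_commute: "shift (shift x a) b = shift (shift x b) a"
  by (auto simp: shift_def fun_eq_iff)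

definition toward :: "pt \<Rightarrow> pt \<Rightarrow> int \<Rightarrow> bool" where
  "toward p s a \<longleftrightarrow> sgn a * (s (nat \<bar>a\<bar>) - p (nat \<bar>a\<bar>)) \<ge> 1"

lemma mdist_shift:
  assumes "signed_idx n a"
  shows "mdist n (shift p a) s = (if toward p s a then mdist n p s - 1 else mdist n p s + 1)"
proof -
  define k where "k = nat \<bar>a\<bar>"
  have k: "k \<in> {1..n}"
    using signed_idx_coord[OF assms] k_def by simp
  define rest where "rest = (\<Sum>i\<in>{1..n}-{k}. \<bar>p i - s i\<bar>)"
  have "(\<Sum>i\<in>{1..n}-{k}. \<bar>shift p a i - s i\<bar>) = rest"
    unfolding rest_def by (rule sum.cong) (auto simp: shift_def k_def)
  moreover have "mdist n (shift p a) s =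
      \<bar>shift p a k - s k\<bar> + (\<Sum>i\<in>{1..n}-{k}. \<bar>shift p a i - s i\<bar>)"
    unfolding mdist_def by (rule sum.remove[OF _ k]) simp
  ultimately have "mdist n (shift p a) s = \<bar>p k + sgn a - s k\<bar> + rest"
    by (simp add: shift_def k_def)
  moreover have "mdist n p s = \<bar>p k - s k\<bar> + rest"
    unfolding mdist_def rest_def by (rule sum.remove[OF _ k]) simp
  ultimately show ?thesis
    using sgn_signed_idx[OF assms] unfolding toward_def k_def[symmetric] by auto
qed

lemma mdist_shift_self: "signed_idx n a \<Longrightarrow> mdist n u (shift u a) = 1"
  using mdist_shift[of n a u u] by (simp add: mdist_commute toward_def)

lemma mdist_shift_self': "signed_idx n a \<Longrightarrow> mdist n (shift u a) u = 1"
  using mdist_shift_self mdist_commute by metis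

lemma toward_iff_mdist_shift:
  "signed_idx n a \<Longrightarrow> mdist n p s = 2 \<Longrightarrow> toward p s a \<longleftrightarrow> mdist n (shift p a) s = 1"
  using mdist_shift[of n a p s] by auto

lemma toward_exists:
  assumes "p \<in> lattice n" "s \<in> lattice n" "p \<noteq> s"
  obtains a where "signed_idx n a" "toward p s a"
proof -
  obtain i where i: "p i \<noteq> s i"
    using assms(3) by auto
  have "i \<in> {1..n}"
    using i assms(1,2) unfolding lattice_def by (metis (mono_tags, lifting) mem_Collect_eq)
  define a where "a = sgn (s i - p i) * int i"
  have coord: "nat \<bar>a\<bar> = i"
    using i \<open>i \<in> {1..n}\<close> unfolding a_def by (auto simp: abs_mult abs_sgn_eq)
  have "signed_idx n a"
    using coord i \<open>i \<in> {1..n}\<close> unfolding signed_idx_def a_def by (auto simp: abs_mult sgn_0_0)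
  moreover have "toward p s a"
    using i \<open>i \<in> {1..n}\<close> unfolding toward_def coord unfolding a_def by (auto simp: sgn_mult sgn_if)
  ultimately show ?thesis
    using that by blast
qed

lemma mdist_eq_1_imp_shift:
  assumes "p \<in> lattice n" "y \<in> lattice n" "mdist n p y = 1"
  obtains a where "signed_idx n a" "y = shift p a"
proof -
  have "p \<noteq> y"
    using assms(3) by auto
  then obtain a where a: "signed_idx n a" "toward p y a"
    using toward_exists assms(1,2) by blast
  then have "mdist n (shift p a) y = 0"
    using mdist_shift[OF a(1)] assms(3) by simp
  then have "shift p a = y"
    using mdist_eq_0_imp_eq shift_in_lattice a(1) assms(1,2) by blast
  then show ?thesis
    using that a(1) by blast
qed

text \<open>If no coordinate has \<open>s\<close> and \<open>t\<close> strictly on the same side of \<open>p\<close>, then \<open>p\<close> lies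
coordinatewise between them and the triangle inequality through \<open>p\<close> is an equality.\<close>

lemma toward_common:
  assumes "mdist n s t < mdist n p s + mdist n p t"
  obtains a where "signed_idx n a" "toward p s a" "toward p t a"
proof -
  have "\<exists>a. signed_idx n a \<and> toward p s a \<and> toward p t a"
  proof (rule ccontr)
    assume none: "\<nexists>a. signed_idx n a \<and> toward p s a \<and> toward p t a"
    have "\<bar>s k - t k\<bar> = \<bar>p k - s k\<bar> + \<bar>p k - t k\<bar>" if k: "k \<in> {1..n}" for k
    proof (rule ccontr)
      assume "\<bar>s k - t k\<bar> \<noteq> \<bar>p k - s k\<bar> + \<bar>p k - t k\<bar>"
      then consider "s k - p k > 0" "t k - p k > 0" | "s k - p k < 0" "t k - p k < 0"
        by arith
      then show False
      proof cases
        case 1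
        then have "signed_idx n (int k) \<and> toward p s (int k) \<and> toward p t (int k)"
          using k unfolding toward_def signed_idx_def by auto
        then show False using none by blast
      next
        case 2
        then have "signed_idx n (- int k) \<and> toward p s (- int k) \<and> toward p t (- int k)"
          using k unfolding toward_def signed_idx_def by auto
        then show False using none by blast
      qed
    qed
    then have "mdist n s t = mdist n p s + mdist n p t"
      unfolding mdist_def sum.distrib[symmetric] by (rule sum.cong[OF refl])
    then show False
      using assms by simp
  qed
  then show ?thesis
    using that by blast
qed

lemma toward_shift_other: "\<bar>a\<bar> \<noteq> \<bar>b\<bar> \<Longrightarrow> toward (shift p a) s b \<longleftrightarrow> toward p s b"
  unfolding toward_def shift_def by (auto simp: nat_eq_iff2)

lemma eq_shift_shift_of_toward:
  assumes "p \<in> lattice n" "s \<in> lattice n" "mdist n p s \<le> 2"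
    and "signed_idx n a" "signed_idx n b" "a \<noteq> b" "toward p s a" "toward p s b"
  shows "\<bar>a\<bar> \<noteq> \<bar>b\<bar>" "s = shift (shift p a) b"
proof -
  show ab: "\<bar>a\<bar> \<noteq> \<bar>b\<bar>"
  proof
    assume "\<bar>a\<bar> = \<bar>b\<bar>"
    then have "b = - a"
      using assms(6) by (auto simp: abs_if split: if_splits)
    then show False
      using assms(7,8) unfolding toward_def by (auto simp: sgn_if split: if_splits)
  qed
  have "toward (shift p a) s b"
    using assms(8) toward_shift_other[OF ab] by simp
  then have "mdist n (shift (shift p a) b) s = 0"
    using mdist_shift[OF assms(5)] mdist_shift[OF assms(4)] assms(3,7)
      mdist_nonneg[of n "shift (shift p a) b" s] by auto
  then show "s = shift (shift p a) b"
    using mdist_eq_0_imp_eq assms(1,2,4,5) shift_in_lattice by metis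
qed

lemma toward_shift_shift_cases:
  assumes "\<bar>a\<bar> \<noteq> \<bar>b\<bar>" "signed_idx n a" "signed_idx n b" "signed_idx n c"
    and "toward p (shift (shift p a) b) c"
  shows "c = a \<or> c = b"
proof -
  have eq_if: "c = d" if "nat \<bar>c\<bar> = nat \<bar>d\<bar>" "sgn c * sgn d \<ge> 1" "signed_idx n d" for d
  proof -
    have "sgn c = sgn d"
      using that(2) sgn_signed_idx[OF assms(4)] sgn_signed_idx[OF that(3)] by auto
    moreover have "\<bar>c\<bar> = \<bar>d\<bar>"
      using that(1) by simp
    ultimately show ?thesis
      by (metis sgn_mult_abs)
  qed
  have ab: "nat \<bar>a\<bar> \<noteq> nat \<bar>b\<bar>"
    using assms(1) by simp
  have diff: "shift (shift p a) b (nat \<bar>c\<bar>) - p (nat \<bar>c\<bar>) =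
      (if nat \<bar>c\<bar> = nat \<bar>a\<bar> then sgn a else 0) + (if nat \<bar>c\<bar> = nat \<bar>b\<bar> then sgn b else 0)"
    using ab unfolding shift_def by auto
  consider "nat \<bar>c\<bar> = nat \<bar>a\<bar>" | "nat \<bar>c\<bar> = nat \<bar>b\<bar>"
    | "nat \<bar>c\<bar> \<noteq> nat \<bar>a\<bar>" "nat \<bar>c\<bar> \<noteq> nat \<bar>b\<bar>"
    by blast
  then show ?thesis
  proof cases
    case 1
    then have "sgn c * sgn a \<ge> 1"
      using assms(5) diff ab unfolding toward_def by simp
    then show ?thesis using eq_if 1 assms(2) by blast
  next
    case 2
    then have "sgn c * sgn b \<ge> 1"
      using assms(5) diff ab unfolding toward_def by simp
    then show ?thesis using eq_if 2 assms(3) by blast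
  next
    case 3
    then show ?thesis
      using assms(5) diff unfolding toward_def by simp
  qed
qed

lemma shift_shift_neq:
  assumes "\<bar>a\<bar> \<noteq> \<bar>b\<bar>" "signed_idx n a"
  shows "shift (shift p a) b \<noteq> p"
proof
  assume "shift (shift p a) b = p"
  then have "shift (shift p a) b (nat \<bar>a\<bar>) = p (nat \<bar>a\<bar>)"
    by simp
  then show False
    using assms unfolding shift_def signed_idx_def by (auto simp: nat_eq_iff2 sgn_0_0)
qed

inductive standard_cell :: "nat \<Rightarrow> pt set \<Rightarrow> bool" for n where
  nbhd: "x \<in> lattice n \<Longrightarrow> standard_cell n (closed_nbhd n x)"
| square: "\<lbrakk>x \<in> lattice n; signed_idx n i; signed_idx n j; \<bar>i\<bar> \<noteq> \<bar>j\<bar>\<rbrakk> \<Longrightarrow>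
    standard_cell n {x, shift x i, shift x j, shift (shift x i) j}"
| tetrahedron: "\<lbrakk>x \<in> lattice n; signed_idx n i; signed_idx n j; signed_idx n k;
    \<bar>i\<bar> \<noteq> \<bar>j\<bar>; \<bar>j\<bar> \<noteq> \<bar>k\<bar>; \<bar>i\<bar> \<noteq> \<bar>k\<bar>\<rbrakk> \<Longrightarrow>
    standard_cell n {x, shift (shift x i) j, shift (shift x j) k, shift (shift x i) k}"

lemma closed_nbhd_subset_shifts:
  assumes "c \<in> lattice n"
  shows "closed_nbhd n c \<subseteq> insert c (shift c ` {a. signed_idx n a})"
proof
  fix y assume "y \<in> closed_nbhd n c"
  then have y: "y \<in> lattice n" "mdist n c y \<le> 1"
    unfolding closed_nbhd_def by auto
  then consider "mdist n c y = 0" | "mdist n c y = 1"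
    using mdist_nonneg[of n c y] by linarith
  then show "y \<in> insert c (shift c ` {a. signed_idx n a})"
  proof cases
    case 1
    then show ?thesis using mdist_eq_0_imp_eq[OF assms y(1)] by simp
  next
    case 2
    then show ?thesis using mdist_eq_1_imp_shift[OF assms y(1)] by blast
  qed
qed

lemma finite_closed_nbhd:
  assumes "c \<in> lattice n"
  shows "finite (closed_nbhd n c)"
proof -
  have "{a. signed_idx n a} \<subseteq> {- int n..int n}"
    unfolding signed_idx_def by auto
  then have "finite {a. signed_idx n a}"
    using finite_subset by blast
  then show ?thesis
    using finite_subset[OF closed_nbhd_subset_shifts[OF assms]] by blast
qed

lemma standard_cell_finite: "standard_cell n C \<Longrightarrow> finite C"
  by (induction rule: standard_cell.induct) (auto intro: finite_closed_nbhd)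

lemma mdist_le_2_of_four:
  assumes "mdist n w x \<le> 2" "mdist n w y \<le> 2" "mdist n w z \<le> 2"
    "mdist n x y \<le> 2" "mdist n x z \<le> 2" "mdist n y z \<le> 2"
    and "u \<in> {w, x, y, z}" "v \<in> {w, x, y, z}"
  shows "mdist n u v \<le> 2"
  using assms by (auto simp: mdist_commute)

lemma mdist_shift_shift_le_2:
  assumes "signed_idx n a" "signed_idx n b"
  shows "mdist n (shift y a) (shift y b) \<le> 2" "mdist n y (shift (shift y a) b) \<le> 2"
proof -
  show "mdist n (shift y a) (shift y b) \<le> 2"
    using mdist_shift_self'[OF assms(1)] mdist_shift_self[OF assms(2)]
    by (intro mdist_le_2_via[where w = y]) simp_all
  show "mdist n y (shift (shift y a) b) \<le> 2"
    using mdist_shift_self[OF assms(1)] mdist_shift_self[OF assms(2)]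
    by (intro mdist_le_2_via[where w = "shift y a"]) simp_all
qed

lemma standard_cell_diam:
  assumes "standard_cell n C" "u \<in> C" "v \<in> C"
  shows "mdist n u v \<le> 2"
  using assms
proof (induction rule: standard_cell.induct)
  case (nbhd x)
  then have "mdist n u x \<le> 1" "mdist n x v \<le> 1"
    unfolding closed_nbhd_def by (auto simp: mdist_commute)
  then show ?case
    by (rule mdist_le_2_via)
next
  case (square x i j)
  have "mdist n x (shift x i) \<le> 2" "mdist n x (shift x j) \<le> 2"
    using mdist_shift_self[OF square(2)] mdist_shift_self[OF square(3)] by simp_all
  moreover have "mdist n x (shift (shift x i) j) \<le> 2" "mdist n (shift x i) (shift x j) \<le> 2"
    using mdist_shift_shift_le_2[OF square(2,3)] by simp_all
  moreover have "mdist n (shift x i) (shift (shift x i) j) \<le> 2"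
    using mdist_shift_self[OF square(3)] by simp
  moreover have "mdist n (shift x j) (shift (shift x i) j) \<le> 2"
    using mdist_shift_self[OF square(2), of "shift x j"] by (simp add: shift_commute[of x i j])
  ultimately show ?case
    using square.prems by (rule mdist_le_2_of_four)
next
  case (tetrahedron x i j k)
  note le_2 = mdist_shift_shift_le_2
  have "mdist n x (shift (shift x i) j) \<le> 2" "mdist n x (shift (shift x j) k) \<le> 2"
    "mdist n x (shift (shift x i) k) \<le> 2"
    using le_2(2)[OF tetrahedron(2,3)] le_2(2)[OF tetrahedron(3,4)] le_2(2)[OF tetrahedron(2,4)]
    by simp_all
  moreover have "mdist n (shift (shift x i) j) (shift (shift x j) k) \<le> 2"
    using le_2(1)[OF tetrahedron(2,4), of "shift x j"] by (simp add: shift_commute[of x i j])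
  moreover have "mdist n (shift (shift x i) j) (shift (shift x i) k) \<le> 2"
    using le_2(1)[OF tetrahedron(3,4)] by simp
  moreover have "mdist n (shift (shift x j) k) (shift (shift x i) k) \<le> 2"
    using le_2(1)[OF tetrahedron(3,2), of "shift x k"] by (simp add: shift_commute[of x k])
  ultimately show ?case
    using tetrahedron.prems by (rule mdist_le_2_of_four)
qed

lemma subset_closed_nbhd:
  "c \<in> lattice n \<Longrightarrow> S \<subseteq> lattice n \<Longrightarrow> \<forall>s\<in>S. mdist n c s \<le> 1 \<Longrightarrow> S \<subseteq> closed_nbhd n c"
  unfolding closed_nbhd_def by auto

lemma subset_square:
  assumes S: "S \<subseteq> lattice n" "\<forall>u\<in>S. \<forall>v\<in>S. mdist n u v \<le> 2"
    and a: "signed_idx n a" and b: "signed_idx n b" and ab: "\<bar>a\<bar> \<noteq> \<bar>b\<bar>"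
    and in_S: "x \<in> S" "shift x a \<in> S" "shift x b \<in> S" "shift (shift x a) b \<in> S"
    and diag: "mdist n x (shift (shift x a) b) = 2"
  shows "S \<subseteq> {x, shift x a, shift x b, shift (shift x a) b}"
proof
  fix s assume s: "s \<in> S"
  have lat: "x \<in> lattice n" "s \<in> lattice n"
    using S(1) in_S(1) s by auto
  consider "mdist n x s = 0" | "mdist n x s = 1" | "mdist n x s = 2"
    using S(2) in_S(1) s mdist_nonneg[of n x s] by force
  then show "s \<in> {x, shift x a, shift x b, shift (shift x a) b}"
  proof cases
    case 1
    then show ?thesis
      using mdist_eq_0_imp_eq[OF lat] by simp
  next
    case 2
    then obtain c where c: "signed_idx n c" "s = shift x c"
      using mdist_eq_1_imp_shift[OF lat] by blast
    have "mdist n (shift (shift x a) b) s = 1"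
      using mdist_eq_1_of_odd[of n "shift (shift x a) b" s x] S(2) in_S(4) s diag 2 by simp
    then have "toward x (shift (shift x a) b) c"
      using toward_iff_mdist_shift[OF c(1) diag] c(2) mdist_commute by metis
    then have "c = a \<or> c = b"
      using toward_shift_shift_cases[OF ab a b c(1)] by simp
    then show ?thesis
      using c(2) by auto
  next
    case 3
    have "mdist n (shift x a) s = 1"
      using mdist_eq_1_of_odd[of n "shift x a" s x] S(2) in_S(2) s 3 mdist_shift_self[OF a]
      by simp
    moreover have "mdist n (shift x b) s = 1"
      using mdist_eq_1_of_odd[of n "shift x b" s x] S(2) in_S(3) s 3 mdist_shift_self[OF b]
      by simp
    ultimately have "toward x s a" "toward x s b"
      using toward_iff_mdist_shift[OF _ 3] a b by auto
    moreover have "a \<noteq> b"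
      using ab by auto
    ultimately show ?thesis
      using eq_shift_shift_of_toward(2)[OF lat _ a b] 3 by simp
  qed
qed

lemma subset_cell_of_unit_pair:
  assumes S: "S \<subseteq> lattice n" "\<forall>u\<in>S. \<forall>v\<in>S. mdist n u v \<le> 2"
    and xy: "x \<in> S" "y \<in> S" "mdist n x y = 1"
  shows "\<exists>C. standard_cell n C \<and> S \<subseteq> C"
proof (cases "\<exists>c\<in>{x, y}. \<forall>s\<in>S. mdist n c s \<le> 1")
  case True
  then obtain c where "c \<in> lattice n" "S \<subseteq> closed_nbhd n c"
    using subset_closed_nbhd S(1) xy(1,2) by blast
  then show ?thesis
    using standard_cell.nbhd by blast
next
  case False
  then obtain x' y' where "x' \<in> S" "\<not> mdist n x x' \<le> 1" "y' \<in> S" "\<not> mdist n y y' \<le> 1"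
    by blast
  with S(2) xy(1,2) have x': "x' \<in> S" "mdist n x x' = 2" and y': "y' \<in> S" "mdist n y y' = 2"
    by force+
  have lat: "x \<in> lattice n" "x' \<in> lattice n"
    using S(1) xy(1) x'(1) by auto
  obtain a where a: "signed_idx n a" "y = shift x a"
    using mdist_eq_1_imp_shift S(1) xy by blast
  have "mdist n y x' = 1"
    using mdist_eq_1_of_odd[of n y x' x] S(2) xy x' by simp
  then have to_a: "toward x x' a"
    using toward_iff_mdist_shift[OF a(1) x'(2)] a(2) by simp
  have "mdist n x y' = 1"
    using mdist_eq_1_of_odd[of n x y' y] S(2) xy y' by (simp add: mdist_commute)
  then obtain b where b: "signed_idx n b" "y' = shift x b"
    using mdist_eq_1_imp_shift S(1) xy(1) y'(1) by blast
  have "mdist n x' y' = 1"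
    using mdist_eq_1_of_odd[of n x' y' x] S(2) x' y' \<open>mdist n x y' = 1\<close> by simp
  then have to_b: "toward x x' b"
    using toward_iff_mdist_shift[OF b(1) x'(2)] b(2) mdist_commute by metis
  have "a \<noteq> b"
    using a(2) b(2) y'(2) by auto
  then have ab: "\<bar>a\<bar> \<noteq> \<bar>b\<bar>" and x'_eq: "x' = shift (shift x a) b"
    using eq_shift_shift_of_toward[OF lat _ a(1) b(1) _ to_a to_b] x'(2) by auto
  have "S \<subseteq> {x, shift x a, shift x b, shift (shift x a) b}"
    using subset_square[OF S a(1) b(1) ab] xy(1,2) y'(1) x' a(2) b(2) x'_eq by simp
  then show ?thesis
    using standard_cell.square[OF lat(1) a(1) b(1) ab] by blast
qed

lemma subset_closed_nbhd_of_common_toward: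
  assumes S: "S \<subseteq> lattice n" "\<forall>u\<in>S. \<forall>v\<in>S. u \<noteq> v \<longrightarrow> mdist n u v = 2"
    and p: "p \<in> S" and a: "signed_idx n a" "\<forall>s\<in>S - {p}. toward p s a"
  shows "S \<subseteq> closed_nbhd n (shift p a)"
proof -
  have "mdist n (shift p a) s \<le> 1" if s: "s \<in> S" for s
  proof (cases "s = p")
    case True
    then show ?thesis
      using mdist_shift_self'[OF a(1)] by simp
  next
    case False
    then have "mdist n p s = 2" "toward p s a"
      using S(2) p s a(2) by auto
    then show ?thesis
      using toward_iff_mdist_shift[OF a(1)] by simp
  qed
  moreover have "shift p a \<in> lattice n"
    using shift_in_lattice S(1) p a(1) by blast
  ultimately show ?thesis
    using subset_closed_nbhd[OF _ S(1)] by blast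
qed

lemma subset_tetrahedron:
  assumes S: "S \<subseteq> lattice n" "\<forall>u\<in>S. \<forall>v\<in>S. u \<noteq> v \<longrightarrow> mdist n u v = 2"
    and p: "p \<in> S"
    and abc: "signed_idx n a" "signed_idx n b" "signed_idx n c"
      "\<bar>a\<bar> \<noteq> \<bar>b\<bar>" "\<bar>b\<bar> \<noteq> \<bar>c\<bar>" "\<bar>a\<bar> \<noteq> \<bar>c\<bar>"
    and in_S: "shift (shift p a) b \<in> S" "shift (shift p b) c \<in> S" "shift (shift p a) c \<in> S"
  shows "S \<subseteq> {p, shift (shift p a) b, shift (shift p b) c, shift (shift p a) c}"
proof
  fix r assume r: "r \<in> S"
  have lat: "p \<in> lattice n" "r \<in> lattice n"
    using S(1) p r by auto
  show "r \<in> {p, shift (shift p a) b, shift (shift p b) c, shift (shift p a) c}"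
  proof (rule ccontr)
    assume "r \<notin> {p, shift (shift p a) b, shift (shift p b) c, shift (shift p a) c}"
    then have r_ne: "r \<noteq> p" "r \<noteq> shift (shift p a) b" "r \<noteq> shift (shift p b) c"
      "r \<noteq> shift (shift p a) c"
      by auto
    have pr: "mdist n p r = 2"
      using S(2) p r r_ne(1) by auto
    have shared: "toward p r e \<or> toward p r f"
      if ef: "signed_idx n e" "signed_idx n f" "\<bar>e\<bar> \<noteq> \<bar>f\<bar>"
        and q: "shift (shift p e) f \<in> S" "r \<noteq> shift (shift p e) f" for e f
    proof -
      have "shift (shift p e) f \<noteq> p"
        using shift_shift_neq ef by blast
      then have "mdist n r (shift (shift p e) f) < mdist n p r + mdist n p (shift (shift p e) f)"
        using S(2) p r q pr by auto
      then obtain d where "signed_idx n d" "toward p r d" "toward p (shift (shift p e) f) d"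
        using toward_common by blast
      then show ?thesis
        using toward_shift_shift_cases[OF ef(3,1,2)] by blast
    qed
    have "toward p r a \<or> toward p r b" "toward p r b \<or> toward p r c" "toward p r a \<or> toward p r c"
      using shared[OF abc(1,2,4) in_S(1) r_ne(2)] shared[OF abc(2,3,5) in_S(2) r_ne(3)]
        shared[OF abc(1,3,6) in_S(3) r_ne(4)] by auto
    then have "r = shift (shift p a) b \<or> r = shift (shift p b) c \<or> r = shift (shift p a) c"
      using eq_shift_shift_of_toward(2)[OF lat _ abc(1,2)]
        eq_shift_shift_of_toward(2)[OF lat _ abc(2,3)]
        eq_shift_shift_of_toward(2)[OF lat _ abc(1,3)] abc(4-6) pr by force
    then show False
      using r_ne by blast
  qed
qed

text \<open>With no direction shared by all of \<open>S - {p}\<close>, pick \<open>q\<close> with direction \<open>a\<close>, then \<open>s\<close>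
avoiding \<open>a\<close> and \<open>t\<close> avoiding the direction \<open>b\<close> shared by \<open>q\<close> and \<open>s\<close>; their pairwise shared
directions force \<open>q = p\<^sup>a\<^sup>b\<close>, \<open>s = p\<^sup>b\<^sup>c\<close>, \<open>t = p\<^sup>a\<^sup>c\<close>.\<close>

lemma subset_tetrahedron_of_no_common_toward:
  assumes S: "S \<subseteq> lattice n" "\<forall>u\<in>S. \<forall>v\<in>S. u \<noteq> v \<longrightarrow> mdist n u v = 2"
    and p: "p \<in> S" and q: "q \<in> S" "q \<noteq> p"
    and no_common: "\<And>a. signed_idx n a \<Longrightarrow> \<exists>s\<in>S - {p}. \<not> toward p s a"
  shows "\<exists>C. standard_cell n C \<and> S \<subseteq> C"
proof -
  have pl: "p \<in> lattice n"
    using S(1) p by auto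
  have shared: "\<exists>d. signed_idx n d \<and> toward p u d \<and> toward p v d"
    if "u \<in> S" "v \<in> S" "u \<noteq> p" "v \<noteq> p" "u \<noteq> v" for u v
  proof -
    have "mdist n u v < mdist n p u + mdist n p v"
      using S(2) p that by auto
    then show ?thesis
      using toward_common by metis
  qed
  have diagonal: "\<bar>d\<bar> \<noteq> \<bar>e\<bar> \<and> u = shift (shift p d) e"
    if "u \<in> S" "u \<noteq> p" "signed_idx n d" "signed_idx n e" "d \<noteq> e" "toward p u d" "toward p u e"
    for u d e
    using eq_shift_shift_of_toward[OF pl _ _ that(3-7)] S p that(1,2) by auto
  obtain a where a: "signed_idx n a" "toward p q a"
    using toward_exists pl S(1) q by (metis subsetD)
  obtain s where s: "s \<in> S" "s \<noteq> p" "\<not> toward p s a"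
    using no_common[OF a(1)] by blast
  obtain b where b: "signed_idx n b" "toward p q b" "toward p s b"
    using shared[OF q(1) s(1) q(2) s(2)] s(3) a(2) by blast
  have q_eq: "\<bar>a\<bar> \<noteq> \<bar>b\<bar>" "q = shift (shift p a) b"
    using diagonal[OF q a(1) b(1) _ a(2) b(2)] s(3) b(3) by auto
  obtain t where t: "t \<in> S" "t \<noteq> p" "\<not> toward p t b"
    using no_common[OF b(1)] by blast
  obtain a' where "signed_idx n a'" "toward p q a'" "toward p t a'"
    using shared[OF q(1) t(1) q(2) t(2)] b(2) t(3) by blast
  then have "toward p t a"
    using toward_shift_shift_cases[OF q_eq(1) a(1) b(1)] q_eq(2) t(3) by auto
  obtain c where c: "signed_idx n c" "toward p s c" "toward p t c"
    using shared[OF s(1) t(1) s(2) t(2)] s(3) \<open>toward p t a\<close> by blast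
  have s_eq: "\<bar>b\<bar> \<noteq> \<bar>c\<bar>" "s = shift (shift p b) c"
    using diagonal[OF s(1,2) b(1) c(1) _ b(3) c(2)] t(3) c(3) by auto
  have t_eq: "\<bar>a\<bar> \<noteq> \<bar>c\<bar>" "t = shift (shift p a) c"
    using diagonal[OF t(1,2) a(1) c(1) _ \<open>toward p t a\<close> c(3)] s(3) c(2) by auto
  have "S \<subseteq> {p, shift (shift p a) b, shift (shift p b) c, shift (shift p a) c}"
    using subset_tetrahedron[OF S p a(1) b(1) c(1) q_eq(1) s_eq(1) t_eq(1)] q s t q_eq s_eq t_eq
    by blast
  then show ?thesis
    using standard_cell.tetrahedron[OF pl a(1) b(1) c(1) q_eq(1) s_eq(1) t_eq(1)] by blast
qed

lemma subset_standard_cell: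
  assumes S: "S \<subseteq> lattice n" "S \<noteq> {}" "\<forall>u\<in>S. \<forall>v\<in>S. mdist n u v \<le> 2"
  shows "\<exists>C. standard_cell n C \<and> S \<subseteq> C"
proof (cases "\<exists>x\<in>S. \<exists>y\<in>S. mdist n x y = 1")
  case True
  then show ?thesis
    using subset_cell_of_unit_pair[OF S(1,3)] by blast
next
  case False
  have dist_2: "\<forall>u\<in>S. \<forall>v\<in>S. u \<noteq> v \<longrightarrow> mdist n u v = 2"
  proof (intro ballI impI)
    fix u v assume uv: "u \<in> S" "v \<in> S" "u \<noteq> v"
    then have "mdist n u v \<noteq> 0" "mdist n u v \<noteq> 1"
      using mdist_eq_0_imp_eq S(1) False by blast+
    then show "mdist n u v = 2"
      using S(3) uv mdist_nonneg[of n u v] by force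
  qed
  obtain p where p: "p \<in> S"
    using S(2) by blast
  then have pl: "p \<in> lattice n"
    using S(1) by blast
  consider (common) a where "signed_idx n a" "\<forall>s\<in>S - {p}. toward p s a"
    | (single) "S = {p}"
    | (no_common) q where "q \<in> S" "q \<noteq> p" "\<And>a. signed_idx n a \<Longrightarrow> \<exists>s\<in>S - {p}. \<not> toward p s a"
    using p by blast
  then show ?thesis
  proof cases
    case common
    then show ?thesis
      using subset_closed_nbhd_of_common_toward[OF S(1) dist_2 p] standard_cell.nbhd
        shift_in_lattice[OF pl] by blast
  next
    case single
    then have "S \<subseteq> closed_nbhd n p"
      using subset_closed_nbhd[OF pl S(1)] by simp
    then show ?thesis
      using standard_cell.nbhd[OF pl] by blast
  next
    case no_common
    then show ?thesis
      using subset_tetrahedron_of_no_common_toward[OF S(1) dist_2 p] by blast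
  qed
qed

lemma maximal_simplex_eq_Int:
  assumes "maximal_simplex n X r \<tau>" "\<tau> \<subseteq> C" "finite C" "\<forall>u\<in>C. \<forall>v\<in>C. mdist n u v \<le> r"
  shows "\<tau> = C \<inter> X"
proof -
  have "vr_simplex n X r \<tau>"
    using assms(1) unfolding maximal_simplex_def by blast
  then have "vr_simplex n X r (C \<inter> X)" "\<tau> \<subseteq> C \<inter> X"
    using assms(2-4) unfolding vr_simplex_def by blast+
  then show ?thesis
    using assms(1) unfolding maximal_simplex_def by blast
qed

theorem lemma4p2:
  fixes n m :: nat and \<tau> :: "pt set"
  assumes "n \<ge> 2" and "m > 0"
    and "maximal_simplex n (grid n m) 2 \<tau>"
  shows "(\<exists>x\<in>lattice n. \<tau> = closed_nbhd n x \<inter> grid n m)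
       \<or> (\<exists>x\<in>lattice n. \<exists>i j. signed_idx n i \<and> signed_idx n j \<and> \<bar>i\<bar> \<noteq> \<bar>j\<bar> \<and>
            \<tau> = {x, shift x i, shift x j, shift (shift x i) j} \<inter> grid n m)
       \<or> (\<exists>x\<in>lattice n. \<exists>i j k. signed_idx n i \<and> signed_idx n j \<and> signed_idx n k \<and>
            \<bar>i\<bar> \<noteq> \<bar>j\<bar> \<and> \<bar>j\<bar> \<noteq> \<bar>k\<bar> \<and> \<bar>i\<bar> \<noteq> \<bar>k\<bar> \<and>
            \<tau> = {x, shift (shift x i) j, shift (shift x j) k, shift (shift x i) k} \<inter> grid n m)"
proof -
  have "\<tau> \<noteq> {}" "\<tau> \<subseteq> grid n m" "\<forall>u\<in>\<tau>. \<forall>v\<in>\<tau>. mdist n u v \<le> 2"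
    using assms(3) unfolding maximal_simplex_def vr_simplex_def by auto
  moreover have "grid n m \<subseteq> lattice n"
    unfolding grid_def by auto
  ultimately obtain C where C: "standard_cell n C" "\<tau> \<subseteq> C"
    using subset_standard_cell[of \<tau> n] by blast
  have \<tau>_eq: "\<tau> = C \<inter> grid n m"
    using maximal_simplex_eq_Int[OF assms(3) C(2) standard_cell_finite[OF C(1)]]
      standard_cell_diam[OF C(1)] by blast
  from C(1) show ?thesis
  proof cases
    case (nbhd x)
    then show ?thesis
      using \<tau>_eq by (intro disjI1 bexI[of _ x]) simp_all
  next
    case (square x i j)
    then show ?thesis
      using \<tau>_eq by (intro disjI2[OF disjI1] bexI[of _ x] exI[of _ i] exI[of _ j]) simp_all
  next
    case (tetrahedron x i j k)
    then show ?thesis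
      using \<tau>_eq by (intro disjI2 bexI[of _ x] exI[of _ i] exI[of _ j] exI[of _ k]) simp_all
  qed
qed

end
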